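(* Let $(G_n)$ be a sequence of graphs with $\min_{u\in V}\delta_u=\omega(\log n)$, fix $p\in[0,1]$, and for each $n$ run the $(p,\mathcal B)$-Node-Deterministic-Majority dynamics on $G_n$ from the configuration in which every node is $\mathcal R$. (Fast disruption) If $p>1/2$, then $\Pr(\mathrm{vol}(B^{(2)})=\mathrm{vol}(V))=1-o(1)$ and $\Pr(\tau=1)=1-o(1)$. (Slow disruption) If $p<1/2$, then with $c=1/2-p$, for every $K>0$, $\Pr\big(\forall t\le n^K:\ \mathrm{vol}(R^{(t)})\ge\frac{1+c}{2}\mathrm{vol}(V)\big)=1-o(1)$, and consequently $\Pr(\tau>n^K)=1-o(1)$.
   Context: $G_n=(V,E)$, $V=\{1,\dots,n\}$, $N(u)$ neighbourhood, $\delta_u=|N(u)|$, $\mathrm{vol}(S)=\sum_{v\in S}\delta_v$; asymptotics as $n\to\infty$. States in $\{\mathcal R,\mathcal B\}$; $R^{(t)},B^{(t)}$ are the sets of nodes in each state at round $t$, and $\tau=\inf\{t\ge0:\mathrm{vol}(B^{(t)})/\mathrm{vol}(V)>1/2\}$. $(p,\mathcal B)$-Node-Deterministic-Majority: in each round $t\ge1$, every node $u$ independently takes state $\mathcal B$ with probability $p$; otherwise it adopts the state held at round $t-1$ by the majority of its whole neighbourhood (ties broken by some fixed rule, e.g. uniformly at random). *)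

theory Defs
  imports "HOL-Probability.Probability" "HOL-Library.Landau_Symbols"
begin

text \<open>A configuration is a function nat => bool; True means state B, False means state R.
  Nodes outside V are kept at the default value False.\<close>

definition verts :: "nat \<Rightarrow> nat set" where
  "verts n = {1..n}"

definition nbhd :: "nat \<Rightarrow> (nat \<Rightarrow> nat \<Rightarrow> bool) \<Rightarrow> nat \<Rightarrow> nat set" where
  "nbhd n E u = {v \<in> verts n. E u v}"

definition deg :: "nat \<Rightarrow> (nat \<Rightarrow> nat \<Rightarrow> bool) \<Rightarrow> nat \<Rightarrow> nat" where
  "deg n E u = card (nbhd n E u)"

definition vol :: "nat \<Rightarrow> (nat \<Rightarrow> nat \<Rightarrow> bool) \<Rightarrow> nat set \<Rightarrow> nat" where
  "vol n E S = (\<Sum>v\<in>S. deg n E v)"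

definition blue_set :: "nat \<Rightarrow> (nat \<Rightarrow> bool) \<Rightarrow> nat set" where
  "blue_set n c = {v \<in> verts n. c v}"

definition red_set :: "nat \<Rightarrow> (nat \<Rightarrow> bool) \<Rightarrow> nat set" where
  "red_set n c = {v \<in> verts n. \<not> c v}"

definition node_update ::
  "nat \<Rightarrow> (nat \<Rightarrow> nat \<Rightarrow> bool) \<Rightarrow> real \<Rightarrow> (nat \<Rightarrow> (nat \<Rightarrow> bool) \<Rightarrow> bool pmf)
     \<Rightarrow> (nat \<Rightarrow> bool) \<Rightarrow> nat \<Rightarrow> bool pmf" where
  "node_update n E p tie c u =
     do { b \<leftarrow> bernoulli_pmf p;
          if b then return_pmf True
          else (let nb = card {v \<in> nbhd n E u. c v};
                    nr = card {v \<in> nbhd n E u. \<not> c v}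
                in if nr < nb then return_pmf True
                   else if nb < nr then return_pmf False
                   else tie u c) }"

definition step ::
  "nat \<Rightarrow> (nat \<Rightarrow> nat \<Rightarrow> bool) \<Rightarrow> real \<Rightarrow> (nat \<Rightarrow> (nat \<Rightarrow> bool) \<Rightarrow> bool pmf)
     \<Rightarrow> (nat \<Rightarrow> bool) \<Rightarrow> (nat \<Rightarrow> bool) pmf" where
  "step n E p tie c = Pi_pmf (verts n) False (node_update n E p tie c)"

text \<open>Distribution of the trajectory up to round T, started from the all-R
  configuration: h t is the configuration at round t (for t \<le> T); for t > T the
  entries are the (all-R) initial configuration and carry no meaning.\<close>

primrec traj ::
  "nat \<Rightarrow> (nat \<Rightarrow> nat \<Rightarrow> bool) \<Rightarrow> real \<Rightarrow> (nat \<Rightarrow> (nat \<Rightarrow> bool) \<Rightarrow> bool pmf)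
     \<Rightarrow> nat \<Rightarrow> (nat \<Rightarrow> nat \<Rightarrow> bool) pmf" where
  "traj n E p tie 0 = return_pmf (\<lambda>t v. False)"
| "traj n E p tie (Suc T) =
     do { h \<leftarrow> traj n E p tie T;
          c \<leftarrow> step n E p tie (h T);
          return_pmf (h(Suc T := c)) }"

definition tau :: "nat \<Rightarrow> (nat \<Rightarrow> nat \<Rightarrow> bool) \<Rightarrow> (nat \<Rightarrow> nat \<Rightarrow> bool) \<Rightarrow> enat" where
  "tau n E h = Inf {enat t | t. real (vol n E (blue_set n (h t))) / real (vol n E (verts n)) > 1/2}"

end

theory Submission
  imports Defs
begin

text \<open>
  Started from the all-red configuration, every node sees only red neighbours, so round 1 is an
  i.i.d. Bernoulli(p) colouring. By Hoeffding's inequality and a union bound over the n nodes, the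
  blue fraction of every neighbourhood then deviates from p by less than eps, except with
  probability at most n exp(-2 m eps^2), where m is the minimum degree; eps = p - 1/2 for fast and
  eps = (1/2 - p)/2 for slow disruption.

  If p > 1/2, every node then sees a strict blue majority: double counting (the blue volume is the
  sum over nodes of their blue degrees) gives a blue volume above one half already in round 1, and
  the deterministic majority rule turns every node blue in round 2.

  If p < 1/2, the invariant that every node has a red fraction of at least (1 + (1/2 - p))/2 among
  its neighbours makes every node see a strict red majority, so the next round is again i.i.d.
  Bernoulli(p); the invariant is lost in one round with probability at most n exp(-2 m eps^2) and
  it bounds the red volume from below. A union bound over n^K rounds finishes, since m = omega(log n)
  makes n^(K+1) exp(-2 m eps^2) tend to 0.
\<close>

lemma measure_pmf_prob_bind_le:
  fixes M :: "'a pmf" and f :: "'a \<Rightarrow> 'b pmf"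
  assumes "\<And>x. x \<in> set_pmf M \<Longrightarrow> x \<notin> B \<Longrightarrow> measure_pmf.prob (f x) A \<le> \<delta>" and "0 \<le> \<delta>"
  shows "measure_pmf.prob (bind_pmf M f) A \<le> measure_pmf.prob M B + \<delta>"
proof -
  have "emeasure (bind_pmf M f) A = (\<integral>\<^sup>+x. emeasure (f x) A \<partial>M)"
    by simp
  also have "\<dots> \<le> (\<integral>\<^sup>+x. indicator B x + ennreal \<delta> \<partial>M)"
  proof (intro nn_integral_mono_AE AE_pmfI)
    fix x assume x: "x \<in> set_pmf M"
    show "emeasure (f x) A \<le> indicator B x + ennreal \<delta>"
    proof (cases "x \<in> B")
      case True
      then show ?thesis
        using measure_pmf.emeasure_le_1[of "f x" A] by (simp add: add_increasing2)
    next
      case False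
      then show ?thesis
        using assms(1)[OF x False] by (simp add: measure_pmf.emeasure_eq_measure ennreal_leI)
    qed
  qed
  also have "\<dots> = ennreal (measure_pmf.prob M B + \<delta>)"
    using assms(2) by (simp add: nn_integral_add measure_pmf.emeasure_eq_measure ennreal_plus)
  finally have "ennreal (measure_pmf.prob (bind_pmf M f) A) \<le> ennreal (measure_pmf.prob M B + \<delta>)"
    by (simp add: measure_pmf.emeasure_eq_measure)
  then show ?thesis
    using assms(2) by (subst (asm) ennreal_le_iff) auto
qed

lemma measure_pmf_prob_LIMSEQ_1:
  assumes "g \<longlonglongrightarrow> 0" and "eventually (\<lambda>n. 1 - g n \<le> measure_pmf.prob (M n) (A n)) sequentially"
  shows "(\<lambda>n. measure_pmf.prob (M n) (A n)) \<longlonglongrightarrow> 1"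
proof (rule tendsto_sandwich[OF _ _ _ tendsto_const])
  show "(\<lambda>n. 1 - g n) \<longlonglongrightarrow> 1"
    using tendsto_diff[OF tendsto_const assms(1), of 1] by simp
qed (use assms(2) measure_pmf.prob_le_1 in auto)

lemma measure_pmf_prob_Bex_le:
  assumes "finite I" and "\<And>i. i \<in> I \<Longrightarrow> measure_pmf.prob M {x. P i x} \<le> b"
  shows "measure_pmf.prob M {x. \<exists>i\<in>I. P i x} \<le> real (card I) * b"
proof -
  have "{x. \<exists>i\<in>I. P i x} = (\<Union>i\<in>I. {x. P i x})"
    by auto
  then have "measure_pmf.prob M {x. \<exists>i\<in>I. P i x} \<le> (\<Sum>i\<in>I. measure_pmf.prob M {x. P i x})"
    using assms(1) by (simp add: measure_pmf.finite_measure_subadditive_finite)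
  also have "\<dots> \<le> real (card I) * b"
    using sum_mono[of I _ "\<lambda>_. b"] assms(2) by simp
  finally show ?thesis .
qed

lemma card_Pi_bernoulli_eq_binomial:
  assumes "finite A" and "S \<subseteq> A" and "q \<in> {0..1}"
  shows "map_pmf (\<lambda>c. card {v\<in>S. c v}) (Pi_pmf A False (\<lambda>_. bernoulli_pmf q))
           = binomial_pmf (card S) q"
proof -
  have "finite S"
    using assms(2,1) by (rule finite_subset)
  then have "binomial_pmf (card S) q = map_pmf (\<lambda>c. card {v\<in>S. c v}) (Pi_pmf S False (\<lambda>_. bernoulli_pmf q))"
    using assms(3) by (intro binomial_pmf_altdef') auto
  also have "Pi_pmf S False (\<lambda>_. bernoulli_pmf q)
      = map_pmf (\<lambda>c v. if v \<in> S then c v else False) (Pi_pmf A False (\<lambda>_. bernoulli_pmf q))"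
    using assms by (intro Pi_pmf_subset) auto
  finally show ?thesis
    by (simp add: map_pmf_comp cong: conj_cong)
qed

lemma
  fixes \<epsilon> :: real
  assumes "finite A" and "S \<subseteq> A" and "q \<in> {0..1}" and "0 < card S" and "0 \<le> \<epsilon>"
  shows prob_Pi_bernoulli_fraction_le:
      "measure_pmf.prob (Pi_pmf A False (\<lambda>_. bernoulli_pmf q))
         {c. real (card {v\<in>S. c v}) / card S \<le> q - \<epsilon>} \<le> exp (- 2 * real (card S) * \<epsilon>\<^sup>2)"
    and prob_Pi_bernoulli_fraction_ge:
      "measure_pmf.prob (Pi_pmf A False (\<lambda>_. bernoulli_pmf q))
         {c. q + \<epsilon> \<le> real (card {v\<in>S. c v}) / card S} \<le> exp (- 2 * real (card S) * \<epsilon>\<^sup>2)"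
proof -
  interpret binomial_distribution "card S" q
    using assms(3) by unfold_locales auto
  have count: "measure_pmf.prob (Pi_pmf A False (\<lambda>_. bernoulli_pmf q)) {c. P (card {v\<in>S. c v})}
      = measure_pmf.prob (binomial_pmf (card S) q) {k. P k}" for P
    by (simp flip: card_Pi_bernoulli_eq_binomial[OF assms(1-3)] add: vimage_def)
  show
      "measure_pmf.prob (Pi_pmf A False (\<lambda>_. bernoulli_pmf q))
         {c. real (card {v\<in>S. c v}) / card S \<le> q - \<epsilon>} \<le> exp (- 2 * real (card S) * \<epsilon>\<^sup>2)"
      "measure_pmf.prob (Pi_pmf A False (\<lambda>_. bernoulli_pmf q))
         {c. q + \<epsilon> \<le> real (card {v\<in>S. c v}) / card S} \<le> exp (- 2 * real (card S) * \<epsilon>\<^sup>2)"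
    using prob_le'[of \<epsilon>] prob_ge'[of \<epsilon>] assms(4,5)
      count[of "\<lambda>k. real k / card S \<le> q - \<epsilon>"] count[of "\<lambda>k. q + \<epsilon> \<le> real k / card S"]
    by simp_all
qed

abbreviation blue_degree :: "nat \<Rightarrow> (nat \<Rightarrow> nat \<Rightarrow> bool) \<Rightarrow> (nat \<Rightarrow> bool) \<Rightarrow> nat \<Rightarrow> nat" where
  "blue_degree n E c u \<equiv> card {v \<in> nbhd n E u. c v}"

abbreviation red_degree :: "nat \<Rightarrow> (nat \<Rightarrow> nat \<Rightarrow> bool) \<Rightarrow> (nat \<Rightarrow> bool) \<Rightarrow> nat \<Rightarrow> nat" where
  "red_degree n E c u \<equiv> card {v \<in> nbhd n E u. \<not> c v}"

lemma finite_verts [simp]: "finite (verts n)"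
  by (simp add: verts_def)

lemma card_verts [simp]: "card (verts n) = n"
  by (simp add: verts_def)

lemma finite_nbhd [simp]: "finite (nbhd n E u)"
  and nbhd_subset_verts: "nbhd n E u \<subseteq> verts n"
  by (auto simp: nbhd_def verts_def)

lemma blue_degree_plus_red_degree: "blue_degree n E c u + red_degree n E c u = deg n E u"
proof -
  have "deg n E u = card ({v \<in> nbhd n E u. c v} \<union> {v \<in> nbhd n E u. \<not> c v})"
    unfolding deg_def by (rule arg_cong[where f = card]) auto
  also have "\<dots> = blue_degree n E c u + red_degree n E c u"
    by (rule card_Un_disjoint) auto
  finally show ?thesis
    by simp
qed

lemma real_blue_degree_plus_red_degree:
  "real (blue_degree n E c u) + real (red_degree n E c u) = real (deg n E u)"
  by (metis blue_degree_plus_red_degree of_nat_add)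

lemma vol_eq_sum_card_nbhd_inter:
  assumes E_sym: "\<And>u v. E u v \<Longrightarrow> E v u" and "S \<subseteq> verts n"
  shows "vol n E S = (\<Sum>u\<in>verts n. card {v \<in> nbhd n E u. v \<in> S})"
proof -
  have count: "card {x \<in> A. P x} = (\<Sum>x\<in>A. if P x then 1 else 0)" if "finite A" for A :: "nat set" and P
    using that by (simp add: sum.If_cases Int_def)
  have "finite S"
    using assms(2) by (rule finite_subset) simp
  have E_commute: "E v u \<longleftrightarrow> E u v" for u v
    using E_sym by blast
  have "vol n E S = (\<Sum>v\<in>S. \<Sum>u\<in>verts n. if E v u then 1 else 0)"
    unfolding vol_def deg_def nbhd_def by (simp add: count)
  also have "\<dots> = (\<Sum>u\<in>verts n. \<Sum>v\<in>S. if E u v then 1 else 0)"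
    by (subst sum.swap) (simp only: E_commute)
  also have "\<dots> = (\<Sum>u\<in>verts n. card {v \<in> nbhd n E u. v \<in> S})"
  proof (intro sum.cong refl)
    fix u
    have "{v \<in> nbhd n E u. v \<in> S} = {v \<in> S. E u v}"
      using assms(2) by (auto simp: nbhd_def)
    then show "(\<Sum>v\<in>S. if E u v then 1 else 0) = card {v \<in> nbhd n E u. v \<in> S}"
      using \<open>finite S\<close> by (simp add: count)
  qed
  finally show ?thesis .
qed

lemma
  assumes "\<And>u v. E u v \<Longrightarrow> E v u"
  shows vol_blue_set: "vol n E (blue_set n c) = (\<Sum>u\<in>verts n. blue_degree n E c u)"
    and vol_red_set: "vol n E (red_set n c) = (\<Sum>u\<in>verts n. red_degree n E c u)"
proof -
  have "{v \<in> nbhd n E u. v \<in> blue_set n c} = {v \<in> nbhd n E u. c v}"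
    and "{v \<in> nbhd n E u. v \<in> red_set n c} = {v \<in> nbhd n E u. \<not> c v}" for u
    by (auto simp: nbhd_def blue_set_def red_set_def)
  moreover have "blue_set n c \<subseteq> verts n" and "red_set n c \<subseteq> verts n"
    by (auto simp: blue_set_def red_set_def)
  ultimately show "vol n E (blue_set n c) = (\<Sum>u\<in>verts n. blue_degree n E c u)"
    and "vol n E (red_set n c) = (\<Sum>u\<in>verts n. red_degree n E c u)"
    by (simp_all add: vol_eq_sum_card_nbhd_inter[OF assms])
qed

lemma vol_blue_set_plus_vol_red_set: "vol n E (blue_set n c) + vol n E (red_set n c) = vol n E (verts n)"
proof -
  have "verts n = blue_set n c \<union> red_set n c" and "blue_set n c \<inter> red_set n c = {}"
    by (auto simp: blue_set_def red_set_def)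
  then show ?thesis
    unfolding vol_def by (metis finite_Un finite_verts sum.union_disjoint)
qed

definition local_blue_majority :: "nat \<Rightarrow> (nat \<Rightarrow> nat \<Rightarrow> bool) \<Rightarrow> (nat \<Rightarrow> bool) \<Rightarrow> bool" where
  "local_blue_majority n E c \<longleftrightarrow> (\<forall>u\<in>verts n. red_degree n E c u < blue_degree n E c u)"

definition local_red_share :: "nat \<Rightarrow> (nat \<Rightarrow> nat \<Rightarrow> bool) \<Rightarrow> real \<Rightarrow> (nat \<Rightarrow> bool) \<Rightarrow> bool" where
  "local_red_share n E a c \<longleftrightarrow> (\<forall>u\<in>verts n. a * real (deg n E u) \<le> real (red_degree n E c u))"

lemma step_eq_Pi_bernoulli:
  assumes "\<forall>u\<in>verts n. blue_degree n E c u < red_degree n E c u"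
  shows "step n E p tie c = Pi_pmf (verts n) False (\<lambda>_. bernoulli_pmf p)"
  unfolding step_def
proof (rule Pi_pmf_cong[OF refl refl])
  fix u assume "u \<in> verts n"
  then have "node_update n E p tie c u = bind_pmf (bernoulli_pmf p) return_pmf"
    using assms unfolding node_update_def Let_def by (intro bind_pmf_cong) auto
  then show "node_update n E p tie c u = bernoulli_pmf p"
    by (simp add: bind_return_pmf')
qed

lemma step_eq_all_blue:
  assumes "local_blue_majority n E c"
  shows "step n E p tie c = return_pmf (\<lambda>u. u \<in> verts n)"
proof -
  have "step n E p tie c = Pi_pmf (verts n) False (\<lambda>_. return_pmf True)"
    unfolding step_def
  proof (rule Pi_pmf_cong[OF refl refl])
    fix u assume "u \<in> verts n"
    then have "node_update n E p tie c u = bind_pmf (bernoulli_pmf p) (\<lambda>_. return_pmf True)"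
      using assms unfolding node_update_def Let_def local_blue_majority_def by (intro bind_pmf_cong) auto
    then show "node_update n E p tie c u = return_pmf True"
      by simp
  qed
  then show ?thesis
    by simp
qed

lemma step_eq_Pi_bernoulli_if_local_red_share:
  assumes "1/2 < a" and "\<forall>u\<in>verts n. 0 < deg n E u" and "local_red_share n E a c"
  shows "step n E p tie c = Pi_pmf (verts n) False (\<lambda>_. bernoulli_pmf p)"
proof (intro step_eq_Pi_bernoulli ballI)
  fix u assume u: "u \<in> verts n"
  have "real (deg n E u) / 2 < a * real (deg n E u)"
    using assms(1,2) u by simp
  also have "\<dots> \<le> real (red_degree n E c u)"
    using assms(3) u by (simp add: local_red_share_def)
  finally show "blue_degree n E c u < red_degree n E c u"
    using real_blue_degree_plus_red_degree[of n E u c] by linarith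
qed

lemma traj_Suc_map:
  "traj n E p tie (Suc T)
     = bind_pmf (traj n E p tie T) (\<lambda>h. map_pmf (\<lambda>c. h(Suc T := c)) (step n E p tie (h T)))"
  by (simp add: map_pmf_def)

lemma traj_1: "traj n E p tie 1 = map_pmf (\<lambda>c. (\<lambda>t v. False)(1 := c)) (step n E p tie (\<lambda>v. False))"
  by (simp add: map_pmf_def bind_return_pmf)

lemma traj_1_eq_map_Pi_bernoulli:
  assumes "\<forall>u\<in>verts n. 0 < deg n E u"
  shows "traj n E p tie 1 = map_pmf (\<lambda>c. (\<lambda>t v. False)(1 := c)) (Pi_pmf (verts n) False (\<lambda>_. bernoulli_pmf p))"
proof -
  have "step n E p tie (\<lambda>v. False) = Pi_pmf (verts n) False (\<lambda>_. bernoulli_pmf p)"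
    using assms by (intro step_eq_Pi_bernoulli) (simp add: deg_def)
  then show ?thesis
    by (simp only: traj_1)
qed

lemma prob_traj_invariant_ge:
  assumes "(\<lambda>v. False) \<in> G"
    and "\<And>c. c \<in> G \<Longrightarrow> measure_pmf.prob (step n E p tie c) (- G) \<le> \<delta>" and "0 \<le> \<delta>"
  shows "1 - real T * \<delta> \<le> measure_pmf.prob (traj n E p tie T) {h. \<forall>t\<le>T. h t \<in> G}"
proof -
  have "measure_pmf.prob (traj n E p tie T) {h. \<exists>t\<le>T. h t \<notin> G} \<le> real T * \<delta>"
  proof (induction T)
    case 0
    then show ?case
      using assms(1) by simp
  next
    case (Suc T)
    have "measure_pmf.prob (traj n E p tie (Suc T)) {h. \<exists>t\<le>Suc T. h t \<notin> G}
        \<le> measure_pmf.prob (traj n E p tie T) {h. \<exists>t\<le>T. h t \<notin> G} + \<delta>"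
      unfolding traj_Suc_map
    proof (rule measure_pmf_prob_bind_le[OF _ assms(3)])
      fix h assume h: "h \<notin> {h. \<exists>t\<le>T. h t \<notin> G}"
      then have "(\<lambda>c. h(Suc T := c)) -` {h. \<exists>t\<le>Suc T. h t \<notin> G} = - G"
        by (auto simp: le_Suc_eq)
      then show "measure_pmf.prob (map_pmf (\<lambda>c. h(Suc T := c)) (step n E p tie (h T)))
          {h. \<exists>t\<le>Suc T. h t \<notin> G} \<le> \<delta>"
        using assms(2)[of "h T"] h by simp
    qed
    then show ?case
      using Suc by (simp add: algebra_simps)
  qed
  moreover have "{h. \<forall>t\<le>T. h t \<in> G} = UNIV - {h. \<exists>t\<le>T. h t \<notin> G}"
    by auto
  ultimately show ?thesis
    using measure_pmf.prob_compl[of "{h. \<exists>t\<le>T. h t \<notin> G}" "traj n E p tie T"] by simp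
qed

definition blue_majority :: "nat \<Rightarrow> (nat \<Rightarrow> nat \<Rightarrow> bool) \<Rightarrow> (nat \<Rightarrow> bool) \<Rightarrow> bool" where
  "blue_majority n E c \<longleftrightarrow> 1/2 < real (vol n E (blue_set n c)) / real (vol n E (verts n))"

lemma tau_eq_Inf_blue_majority: "tau n E h = Inf {enat t | t. blue_majority n E (h t)}"
  by (simp add: tau_def blue_majority_def)

lemma enat_less_tau_iff: "enat T < tau n E h \<longleftrightarrow> (\<forall>t\<le>T. \<not> blue_majority n E (h t))"
proof -
  have "enat T < tau n E h \<longleftrightarrow> (\<forall>t. blue_majority n E (h t) \<longrightarrow> enat T < enat t)"
    unfolding tau_eq_Inf_blue_majority by (auto simp flip: Suc_ile_eq simp: le_Inf_iff)
  then show ?thesis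
    by (auto simp: not_le)
qed

lemma tau_eq_enatI:
  assumes "blue_majority n E (h t)" and "\<And>s. s < t \<Longrightarrow> \<not> blue_majority n E (h s)"
  shows "tau n E h = enat t"
  unfolding tau_eq_Inf_blue_majority
proof (rule antisym)
  show "Inf {enat t |t. blue_majority n E (h t)} \<le> enat t"
    using assms(1) by (auto intro: Inf_lower)
  show "enat t \<le> Inf {enat t |t. blue_majority n E (h t)}"
  proof (rule Inf_greatest)
    fix x assume "x \<in> {enat t |t. blue_majority n E (h t)}"
    then obtain s where "x = enat s" and "blue_majority n E (h s)"
      by blast
    then show "enat t \<le> x"
      using assms(2) not_less by auto
  qed
qed

lemma not_blue_majority_if_vol_red_set_ge:
  assumes "1/2 \<le> a" and "a * real (vol n E (verts n)) \<le> real (vol n E (red_set n c))"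
  shows "\<not> blue_majority n E c"
proof (cases "vol n E (verts n) = 0")
  case False
  have "1/2 * real (vol n E (verts n)) \<le> a * real (vol n E (verts n))"
    using assms(1) by (intro mult_right_mono) auto
  then have "real (vol n E (blue_set n c)) \<le> 1/2 * real (vol n E (verts n))"
    using assms(2) vol_blue_set_plus_vol_red_set[of n E c] by linarith
  then show ?thesis
    using False by (simp add: blue_majority_def pos_divide_le_eq not_less)
qed (simp add: blue_majority_def)

lemma not_blue_majority_all_red: "\<not> blue_majority n E (\<lambda>v. False)"
  by (simp add: blue_majority_def blue_set_def vol_def)

lemma blue_majority_if_local_blue_majority:
  assumes E_sym: "\<And>u v. E u v \<Longrightarrow> E v u" and "1 \<le> n" and "local_blue_majority n E c"
  shows "blue_majority n E c"
proof -
  have "verts n \<noteq> {}"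
    using assms(2) by (auto simp: verts_def)
  then have "(\<Sum>u\<in>verts n. red_degree n E c u) < (\<Sum>u\<in>verts n. blue_degree n E c u)"
    using assms(3) unfolding local_blue_majority_def by (intro sum_strict_mono) auto
  then have "vol n E (red_set n c) < vol n E (blue_set n c)"
    by (simp only: vol_blue_set[OF E_sym] vol_red_set[OF E_sym])
  moreover have "vol n E (blue_set n c) + vol n E (red_set n c) = vol n E (verts n)"
    by (rule vol_blue_set_plus_vol_red_set)
  ultimately have "1/2 * real (vol n E (verts n)) < real (vol n E (blue_set n c))"
    and "0 < real (vol n E (verts n))"
    by linarith+
  then show ?thesis
    by (simp add: blue_majority_def pos_less_divide_eq)
qed

lemma vol_red_set_ge_if_local_red_share:
  assumes E_sym: "\<And>u v. E u v \<Longrightarrow> E v u" and "local_red_share n E a c"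
  shows "a * real (vol n E (verts n)) \<le> real (vol n E (red_set n c))"
proof -
  have "a * real (vol n E (verts n)) = (\<Sum>u\<in>verts n. a * real (deg n E u))"
    by (simp add: vol_def sum_distrib_left)
  also have "\<dots> \<le> (\<Sum>u\<in>verts n. real (red_degree n E c u))"
    using assms(2) unfolding local_red_share_def by (intro sum_mono) auto
  also have "\<dots> = real (vol n E (red_set n c))"
    by (simp add: vol_red_set[OF E_sym])
  finally show ?thesis .
qed

lemma
  assumes "u \<in> verts n" and "0 < m" and "m \<le> real (deg n E u)" and "q \<in> {0..1}" and "0 \<le> \<epsilon>"
  shows prob_blue_degree_le:
      "measure_pmf.prob (Pi_pmf (verts n) False (\<lambda>_. bernoulli_pmf q))
         {c. real (blue_degree n E c u) \<le> (q - \<epsilon>) * real (deg n E u)} \<le> exp (- 2 * m * \<epsilon>\<^sup>2)"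
    and prob_blue_degree_ge:
      "measure_pmf.prob (Pi_pmf (verts n) False (\<lambda>_. bernoulli_pmf q))
         {c. (q + \<epsilon>) * real (deg n E u) \<le> real (blue_degree n E c u)} \<le> exp (- 2 * m * \<epsilon>\<^sup>2)"
proof -
  have deg_pos: "0 < real (deg n E u)"
    using assms(2,3) by linarith
  then have card_pos: "0 < card (nbhd n E u)"
    by (simp add: deg_def)
  have exp_le: "exp (- 2 * real (deg n E u) * \<epsilon>\<^sup>2) \<le> exp (- 2 * m * \<epsilon>\<^sup>2)"
    using assms(3) by (simp add: mult_right_mono)
  have "measure_pmf.prob (Pi_pmf (verts n) False (\<lambda>_. bernoulli_pmf q))
      {c. real (blue_degree n E c u) \<le> (q - \<epsilon>) * real (deg n E u)} \<le> exp (- 2 * real (deg n E u) * \<epsilon>\<^sup>2)"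
    using prob_Pi_bernoulli_fraction_le[OF finite_verts nbhd_subset_verts assms(4) card_pos assms(5)]
      deg_pos by (simp add: deg_def pos_divide_le_eq)
  then show "measure_pmf.prob (Pi_pmf (verts n) False (\<lambda>_. bernoulli_pmf q))
      {c. real (blue_degree n E c u) \<le> (q - \<epsilon>) * real (deg n E u)} \<le> exp (- 2 * m * \<epsilon>\<^sup>2)"
    using exp_le by (rule order_trans)
  have "measure_pmf.prob (Pi_pmf (verts n) False (\<lambda>_. bernoulli_pmf q))
      {c. (q + \<epsilon>) * real (deg n E u) \<le> real (blue_degree n E c u)} \<le> exp (- 2 * real (deg n E u) * \<epsilon>\<^sup>2)"
    using prob_Pi_bernoulli_fraction_ge[OF finite_verts nbhd_subset_verts assms(4) card_pos assms(5)]
      deg_pos by (simp add: deg_def pos_le_divide_eq)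
  then show "measure_pmf.prob (Pi_pmf (verts n) False (\<lambda>_. bernoulli_pmf q))
      {c. (q + \<epsilon>) * real (deg n E u) \<le> real (blue_degree n E c u)} \<le> exp (- 2 * m * \<epsilon>\<^sup>2)"
    using exp_le by (rule order_trans)
qed

lemma prob_not_local_blue_majority_le:
  assumes "1/2 < q" and "q \<le> 1" and "0 < m" and "\<forall>u\<in>verts n. m \<le> real (deg n E u)"
  shows "measure_pmf.prob (Pi_pmf (verts n) False (\<lambda>_. bernoulli_pmf q)) {c. \<not> local_blue_majority n E c}
           \<le> real n * exp (- 2 * m * (q - 1/2)\<^sup>2)"
proof -
  have "{c. \<not> local_blue_majority n E c}
      \<subseteq> {c. \<exists>u\<in>verts n. real (blue_degree n E c u) \<le> 1/2 * real (deg n E u)}"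
  proof (intro subsetI CollectI)
    fix c assume "c \<in> {c. \<not> local_blue_majority n E c}"
    then obtain u where "u \<in> verts n" and "real (blue_degree n E c u) \<le> real (red_degree n E c u)"
      by (auto simp: local_blue_majority_def not_less)
    moreover have "real (blue_degree n E c u) + real (red_degree n E c u) = real (deg n E u)"
      by (rule real_blue_degree_plus_red_degree)
    ultimately show "\<exists>u\<in>verts n. real (blue_degree n E c u) \<le> 1/2 * real (deg n E u)"
      by (intro bexI[of _ u]) auto
  qed
  then have "measure_pmf.prob (Pi_pmf (verts n) False (\<lambda>_. bernoulli_pmf q)) {c. \<not> local_blue_majority n E c}
      \<le> measure_pmf.prob (Pi_pmf (verts n) False (\<lambda>_. bernoulli_pmf q))
           {c. \<exists>u\<in>verts n. real (blue_degree n E c u) \<le> 1/2 * real (deg n E u)}"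
    by (rule measure_pmf.finite_measure_mono) simp
  also have "\<dots> \<le> real n * exp (- 2 * m * (q - 1/2)\<^sup>2)"
    using assms prob_blue_degree_le[where q = q and \<epsilon> = "q - 1/2"]
    by (intro measure_pmf_prob_Bex_le[where I = "verts n", simplified]) auto
  finally show ?thesis .
qed

lemma prob_not_local_red_share_le:
  assumes "q \<in> {0..1}" and "0 \<le> \<epsilon>" and "0 < m" and "\<forall>u\<in>verts n. m \<le> real (deg n E u)"
  shows "measure_pmf.prob (Pi_pmf (verts n) False (\<lambda>_. bernoulli_pmf q)) {c. \<not> local_red_share n E (1 - q - \<epsilon>) c}
           \<le> real n * exp (- 2 * m * \<epsilon>\<^sup>2)"
proof -
  have "{c. \<not> local_red_share n E (1 - q - \<epsilon>) c}
      \<subseteq> {c. \<exists>u\<in>verts n. (q + \<epsilon>) * real (deg n E u) \<le> real (blue_degree n E c u)}"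
  proof (intro subsetI CollectI)
    fix c assume "c \<in> {c. \<not> local_red_share n E (1 - q - \<epsilon>) c}"
    then obtain u where "u \<in> verts n" and "real (red_degree n E c u) < (1 - q - \<epsilon>) * real (deg n E u)"
      by (auto simp: local_red_share_def not_le)
    moreover have "real (blue_degree n E c u) + real (red_degree n E c u) = real (deg n E u)"
      by (rule real_blue_degree_plus_red_degree)
    ultimately show "\<exists>u\<in>verts n. (q + \<epsilon>) * real (deg n E u) \<le> real (blue_degree n E c u)"
      by (intro bexI[of _ u]) (auto simp: algebra_simps)
  qed
  then have "measure_pmf.prob (Pi_pmf (verts n) False (\<lambda>_. bernoulli_pmf q)) {c. \<not> local_red_share n E (1 - q - \<epsilon>) c}
      \<le> measure_pmf.prob (Pi_pmf (verts n) False (\<lambda>_. bernoulli_pmf q))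
           {c. \<exists>u\<in>verts n. (q + \<epsilon>) * real (deg n E u) \<le> real (blue_degree n E c u)}"
    by (rule measure_pmf.finite_measure_mono) simp
  also have "\<dots> \<le> real n * exp (- 2 * m * \<epsilon>\<^sup>2)"
    using assms by (intro measure_pmf_prob_Bex_le[where I = "verts n", simplified] prob_blue_degree_ge) auto
  finally show ?thesis .
qed

lemma fast_disruption_bounds:
  assumes E_sym: "\<And>u v. E u v \<Longrightarrow> E v u" and "1 \<le> n" and "1/2 < p" and "p \<le> 1"
    and "0 < m" and deg_ge: "\<forall>u\<in>verts n. m \<le> real (deg n E u)"
  shows "1 - real n * exp (- 2 * m * (p - 1/2)\<^sup>2) \<le> measure_pmf.prob (traj n E p tie 1) {h. tau n E h = 1}"
    and "1 - real n * exp (- 2 * m * (p - 1/2)\<^sup>2)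
           \<le> measure_pmf.prob (traj n E p tie 2) {h. vol n E (blue_set n (h 2)) = vol n E (verts n)}"
proof -
  define Q where "Q = Pi_pmf (verts n) False (\<lambda>_. bernoulli_pmf p)"
  define \<delta> where "\<delta> = real n * exp (- 2 * m * (p - 1/2)\<^sup>2)"
  have traj1: "traj n E p tie 1 = map_pmf (\<lambda>c. (\<lambda>t v. False)(1 := c)) Q"
    unfolding Q_def using assms(5) deg_ge by (intro traj_1_eq_map_Pi_bernoulli) fastforce
  have bad: "measure_pmf.prob Q {c. \<not> local_blue_majority n E c} \<le> \<delta>"
    unfolding Q_def \<delta>_def using assms(3-6) by (rule prob_not_local_blue_majority_le)
  then have bad1: "measure_pmf.prob (traj n E p tie 1) {h. \<not> local_blue_majority n E (h 1)} \<le> \<delta>"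
    unfolding traj1 by (simp add: vimage_def)
  have "{c. local_blue_majority n E c} \<subseteq> (\<lambda>c. (\<lambda>t v. False)(1 := c)) -` {h. tau n E h = 1}"
    using blue_majority_if_local_blue_majority[OF E_sym assms(2)] not_blue_majority_all_red
    by (auto simp: one_enat_def intro!: tau_eq_enatI)
  then have "measure_pmf.prob Q {c. local_blue_majority n E c} \<le> measure_pmf.prob (traj n E p tie 1) {h. tau n E h = 1}"
    unfolding traj1 by (simp add: measure_pmf.finite_measure_mono)
  then show "1 - \<delta> \<le> measure_pmf.prob (traj n E p tie 1) {h. tau n E h = 1}"
    using bad measure_pmf.prob_compl[of "{c. local_blue_majority n E c}" Q]
    by (simp add: Compl_eq_Diff_UNIV[symmetric] Compl_eq)
  have traj2: "traj n E p tie 2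
      = bind_pmf (traj n E p tie 1) (\<lambda>h. map_pmf (\<lambda>c. h(2 := c)) (step n E p tie (h 1)))"
    using traj_Suc_map[of n E p tie 1] by (simp add: numeral_2_eq_2)
  have "measure_pmf.prob (traj n E p tie 2) {h. vol n E (blue_set n (h 2)) \<noteq> vol n E (verts n)}
      \<le> measure_pmf.prob (traj n E p tie 1) {h. \<not> local_blue_majority n E (h 1)} + 0"
    unfolding traj2
  proof (rule measure_pmf_prob_bind_le)
    fix h :: "nat \<Rightarrow> nat \<Rightarrow> bool" assume "h \<notin> {h. \<not> local_blue_majority n E (h 1)}"
    then have "step n E p tie (h 1) = return_pmf (\<lambda>u. u \<in> verts n)"
      by (intro step_eq_all_blue) simp
    moreover have "blue_set n (\<lambda>u. u \<in> verts n) = verts n"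
      by (auto simp: blue_set_def)
    ultimately show "measure_pmf.prob (map_pmf (\<lambda>c. h(2 := c)) (step n E p tie (h 1)))
        {h. vol n E (blue_set n (h 2)) \<noteq> vol n E (verts n)} \<le> 0"
      by simp
  qed simp
  then show "1 - \<delta> \<le> measure_pmf.prob (traj n E p tie 2) {h. vol n E (blue_set n (h 2)) = vol n E (verts n)}"
    using bad1 measure_pmf.prob_compl[of "{h. vol n E (blue_set n (h 2)) = vol n E (verts n)}" "traj n E p tie 2"]
    by (simp add: Compl_eq_Diff_UNIV[symmetric] Compl_eq)
qed

lemma slow_disruption_bounds:
  assumes E_sym: "\<And>u v. E u v \<Longrightarrow> E v u" and "0 \<le> p" and "p < 1/2"
    and "0 < m" and deg_ge: "\<forall>u\<in>verts n. m \<le> real (deg n E u)"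
  shows "1 - real T * (real n * exp (- 2 * m * ((1/2 - p) / 2)\<^sup>2))
           \<le> measure_pmf.prob (traj n E p tie T)
                {h. \<forall>t\<le>T. (1 + (1/2 - p)) / 2 * real (vol n E (verts n)) \<le> real (vol n E (red_set n (h t)))}"
    and "1 - real T * (real n * exp (- 2 * m * ((1/2 - p) / 2)\<^sup>2))
           \<le> measure_pmf.prob (traj n E p tie T) {h. enat T < tau n E h}"
proof -
  define \<epsilon> where "\<epsilon> = (1/2 - p) / 2"
  define a where "a = 1 - p - \<epsilon>"
  define \<delta> where "\<delta> = real n * exp (- 2 * m * \<epsilon>\<^sup>2)"
  have a: "a = (1 + (1/2 - p)) / 2" "1/2 < a" "a \<le> 1"
    using assms(2,3) unfolding a_def \<epsilon>_def by (simp_all add: field_simps)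
  have "(\<lambda>v. False) \<in> {c. local_red_share n E a c}"
    using a(2,3) by (auto simp: local_red_share_def deg_def intro!: mult_left_le_one_le)
  moreover have "measure_pmf.prob (step n E p tie c) (- {c. local_red_share n E a c}) \<le> \<delta>"
    if "c \<in> {c. local_red_share n E a c}" for c
  proof -
    have "step n E p tie c = Pi_pmf (verts n) False (\<lambda>_. bernoulli_pmf p)"
      using a(2) assms(4) deg_ge that by (intro step_eq_Pi_bernoulli_if_local_red_share) fastforce+
    moreover have "measure_pmf.prob (Pi_pmf (verts n) False (\<lambda>_. bernoulli_pmf p))
        {c. \<not> local_red_share n E (1 - p - \<epsilon>) c} \<le> \<delta>"
      unfolding \<delta>_def using assms(2-5) by (intro prob_not_local_red_share_le) (auto simp: \<epsilon>_def)
    ultimately show ?thesis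
      by (simp add: a_def Compl_eq)
  qed
  ultimately have stays: "1 - real T * \<delta> \<le> measure_pmf.prob (traj n E p tie T) {h. \<forall>t\<le>T. local_red_share n E a (h t)}"
    using prob_traj_invariant_ge[of "{c. local_red_share n E a c}"] by (simp add: \<delta>_def)
  have "measure_pmf.prob (traj n E p tie T) {h. \<forall>t\<le>T. local_red_share n E a (h t)}
      \<le> measure_pmf.prob (traj n E p tie T) {h. \<forall>t\<le>T. a * real (vol n E (verts n)) \<le> real (vol n E (red_set n (h t)))}"
    using vol_red_set_ge_if_local_red_share[OF E_sym] by (intro measure_pmf.finite_measure_mono) auto
  then show "1 - real T * (real n * exp (- 2 * m * ((1/2 - p) / 2)\<^sup>2))
      \<le> measure_pmf.prob (traj n E p tie T)
           {h. \<forall>t\<le>T. (1 + (1/2 - p)) / 2 * real (vol n E (verts n)) \<le> real (vol n E (red_set n (h t)))}"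
    using stays unfolding a(1) \<delta>_def \<epsilon>_def by linarith
  have "measure_pmf.prob (traj n E p tie T) {h. \<forall>t\<le>T. local_red_share n E a (h t)}
      \<le> measure_pmf.prob (traj n E p tie T) {h. enat T < tau n E h}"
    using vol_red_set_ge_if_local_red_share[OF E_sym] not_blue_majority_if_vol_red_set_ge[of a] a(2)
    by (intro measure_pmf.finite_measure_mono) (auto simp: enat_less_tau_iff)
  then show "1 - real T * (real n * exp (- 2 * m * ((1/2 - p) / 2)\<^sup>2))
      \<le> measure_pmf.prob (traj n E p tie T) {h. enat T < tau n E h}"
    using stays unfolding \<delta>_def \<epsilon>_def by linarith
qed

lemma eventually_ge_ln_if_ln_smallo:
  fixes m :: "nat \<Rightarrow> real"
  assumes "(\<lambda>n. ln (real n)) \<in> o(m)" and "\<And>n. 0 \<le> m n" and "0 < C"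
  shows "eventually (\<lambda>n. C * ln (real n) \<le> m n) sequentially"
proof -
  have "eventually (\<lambda>n. norm (ln (real n)) \<le> 1 / C * norm (m n)) sequentially"
    using assms(3) by (intro landau_o.smallD[OF assms(1)]) simp
  with eventually_ge_at_top[of 1] show ?thesis
  proof eventually_elim
    case (elim n)
    then show ?case
      using assms(2,3) by (simp add: abs_of_nonneg field_simps)
  qed
qed

lemma real_nat_floor_powr_mult_le:
  fixes x K :: real
  assumes "0 \<le> x"
  shows "real (nat \<lfloor>x powr K\<rfloor>) * x \<le> x powr (K + 1)"
proof (cases "x = 0")
  case False
  then show ?thesis
    using assms of_nat_floor[of "x powr K"] by (simp add: powr_add mult_right_mono)
qed simp

lemma tendsto_zero_mult_exp_if_ln_smallo:
  fixes m f :: "nat \<Rightarrow> real"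
  assumes "(\<lambda>n. ln (real n)) \<in> o(m)" and "\<And>n. 0 \<le> m n" and "0 < c" and "0 \<le> K"
    and "eventually (\<lambda>n. \<bar>f n\<bar> \<le> real n powr K) sequentially"
  shows "(\<lambda>n. f n * exp (- c * m n)) \<longlonglongrightarrow> 0"
proof (rule Lim_null_comparison[OF _ lim_inverse_n'])
  have "eventually (\<lambda>n. (K + 1) / c * ln (real n) \<le> m n) sequentially"
    using assms(3,4) by (intro eventually_ge_ln_if_ln_smallo[OF assms(1,2)]) simp
  with assms(5) eventually_ge_at_top[of 1]
  show "eventually (\<lambda>n. norm (f n * exp (- c * m n)) \<le> 1 / real n) sequentially"
  proof eventually_elim
    case (elim n)
    then have "(K + 1) * ln (real n) \<le> c * m n"
      using assms(3) by (simp add: field_simps)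
    then have "exp (- c * m n) \<le> real n powr (- (K + 1))"
      using elim(2) by (simp add: powr_def algebra_simps)
    then have "\<bar>f n\<bar> * exp (- c * m n) \<le> real n powr K * real n powr (- (K + 1))"
      using elim(1) by (intro mult_mono) auto
    also have "\<dots> = 1 / real n"
      using elim(2) by (simp add: powr_add[symmetric] powr_minus_divide)
    finally show ?case
      by (simp add: abs_mult)
  qed
qed

lemma eventually_pos_if_ln_smallo:
  fixes m :: "nat \<Rightarrow> real"
  assumes "(\<lambda>n. ln (real n)) \<in> o(m)" and "\<And>n. 0 \<le> m n"
  shows "eventually (\<lambda>n. 0 < m n) sequentially"
proof -
  have "eventually (\<lambda>n. 1 * ln (real n) \<le> m n) sequentially"
    by (rule eventually_ge_ln_if_ln_smallo[OF assms]) simp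
  with eventually_ge_at_top[of 2] show ?thesis
  proof eventually_elim
    case (elim n)
    have "0 < ln (real n)"
      using elim(1) by (intro ln_gt_zero) simp
    with elim(2) show ?case
      by linarith
  qed
qed

lemma fast_disruption:
  fixes m :: "nat \<Rightarrow> real"
  assumes E_sym: "\<And>n u v. E n u v \<Longrightarrow> E n v u" and "1/2 < p" and "p \<le> 1"
    and "(\<lambda>n. ln (real n)) \<in> o(m)" and "\<And>n. 0 \<le> m n"
    and "\<And>n. \<forall>u\<in>verts n. m n \<le> real (deg n (E n) u)"
  shows "(\<lambda>n. measure_pmf.prob (traj n (E n) p (tie n) 2)
            {h. vol n (E n) (blue_set n (h 2)) = vol n (E n) (verts n)}) \<longlonglongrightarrow> 1"
    and "(\<lambda>n. measure_pmf.prob (traj n (E n) p (tie n) 1) {h. tau n (E n) h = 1}) \<longlonglongrightarrow> 1"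
proof -
  have err: "(\<lambda>n. real n * exp (- 2 * m n * (p - 1/2)\<^sup>2)) \<longlonglongrightarrow> 0"
    using tendsto_zero_mult_exp_if_ln_smallo[OF assms(4,5), of "2 * (p - 1/2)\<^sup>2" 1 real] assms(2)
    by (simp add: mult_ac)
  have large: "eventually (\<lambda>n. 1 \<le> n \<and> 0 < m n) sequentially"
    using eventually_pos_if_ln_smallo[OF assms(4,5)] eventually_ge_at_top[of 1] by eventually_elim simp
  show "(\<lambda>n. measure_pmf.prob (traj n (E n) p (tie n) 2)
            {h. vol n (E n) (blue_set n (h 2)) = vol n (E n) (verts n)}) \<longlonglongrightarrow> 1"
    using large by (intro measure_pmf_prob_LIMSEQ_1[OF err])
      (elim eventually_mono, rule fast_disruption_bounds(2)[OF E_sym _ assms(2,3) _ assms(6)], auto)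
  show "(\<lambda>n. measure_pmf.prob (traj n (E n) p (tie n) 1) {h. tau n (E n) h = 1}) \<longlonglongrightarrow> 1"
    using large by (intro measure_pmf_prob_LIMSEQ_1[OF err])
      (elim eventually_mono, rule fast_disruption_bounds(1)[OF E_sym _ assms(2,3) _ assms(6)], auto)
qed

lemma slow_disruption:
  fixes m :: "nat \<Rightarrow> real" and K :: real
  assumes E_sym: "\<And>n u v. E n u v \<Longrightarrow> E n v u" and "0 \<le> p" and "p < 1/2" and "0 < K"
    and "(\<lambda>n. ln (real n)) \<in> o(m)" and "\<And>n. 0 \<le> m n"
    and "\<And>n. \<forall>u\<in>verts n. m n \<le> real (deg n (E n) u)"
  shows "(\<lambda>n. measure_pmf.prob (traj n (E n) p (tie n) (nat \<lfloor>real n powr K\<rfloor>))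
            {h. \<forall>t \<le> nat \<lfloor>real n powr K\<rfloor>.
                  real (vol n (E n) (red_set n (h t)))
                    \<ge> (1 + (1/2 - p)) / 2 * real (vol n (E n) (verts n))}) \<longlonglongrightarrow> 1"
    and "(\<lambda>n. measure_pmf.prob (traj n (E n) p (tie n) (nat \<lfloor>real n powr K\<rfloor>))
            {h. tau n (E n) h > enat (nat \<lfloor>real n powr K\<rfloor>)}) \<longlonglongrightarrow> 1"
proof -
  have err: "(\<lambda>n. real (nat \<lfloor>real n powr K\<rfloor>) * (real n * exp (- 2 * m n * ((1/2 - p) / 2)\<^sup>2))) \<longlonglongrightarrow> 0"
    using tendsto_zero_mult_exp_if_ln_smallo[OF assms(5,6), of "2 * ((1/2 - p) / 2)\<^sup>2" "K + 1"
        "\<lambda>n. real (nat \<lfloor>real n powr K\<rfloor>) * real n"] assms(3,4) real_nat_floor_powr_mult_le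
    by (simp add: mult_ac)
  have large: "eventually (\<lambda>n. 0 < m n) sequentially"
    using eventually_pos_if_ln_smallo[OF assms(5,6)] .
  show "(\<lambda>n. measure_pmf.prob (traj n (E n) p (tie n) (nat \<lfloor>real n powr K\<rfloor>))
            {h. \<forall>t \<le> nat \<lfloor>real n powr K\<rfloor>.
                  real (vol n (E n) (red_set n (h t)))
                    \<ge> (1 + (1/2 - p)) / 2 * real (vol n (E n) (verts n))}) \<longlonglongrightarrow> 1"
    using large by (intro measure_pmf_prob_LIMSEQ_1[OF err])
      (elim eventually_mono, rule slow_disruption_bounds(1)[OF E_sym assms(2,3) _ assms(7)], auto)
  show "(\<lambda>n. measure_pmf.prob (traj n (E n) p (tie n) (nat \<lfloor>real n powr K\<rfloor>))
            {h. tau n (E n) h > enat (nat \<lfloor>real n powr K\<rfloor>)}) \<longlonglongrightarrow> 1"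
    using large by (intro measure_pmf_prob_LIMSEQ_1[OF err])
      (elim eventually_mono, rule slow_disruption_bounds(2)[OF E_sym assms(2,3) _ assms(7)], auto)
qed

theorem proposition6p3:
  fixes E :: "nat \<Rightarrow> nat \<Rightarrow> nat \<Rightarrow> bool"
    and tie :: "nat \<Rightarrow> nat \<Rightarrow> (nat \<Rightarrow> bool) \<Rightarrow> bool pmf"
    and p :: real
  assumes sym: "\<And>n u v. E n u v \<Longrightarrow> E n v u"
    and irrefl: "\<And>n u. \<not> E n u u"
    and mindeg: "(\<lambda>n. ln (real n)) \<in> o(\<lambda>n. real (Min (deg n (E n) ` verts n)))"
    and p: "0 \<le> p" "p \<le> 1"
  shows
    "(p > 1/2 \<longrightarrow>
        ((\<lambda>n. measure_pmf.prob (traj n (E n) p (tie n) 2)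
            {h. vol n (E n) (blue_set n (h 2)) = vol n (E n) (verts n)}) \<longlonglongrightarrow> 1)
      \<and> ((\<lambda>n. measure_pmf.prob (traj n (E n) p (tie n) 1)
            {h. tau n (E n) h = 1}) \<longlonglongrightarrow> 1))
   \<and> (p < 1/2 \<longrightarrow> (\<forall>K::real. K > 0 \<longrightarrow>
        ((\<lambda>n. measure_pmf.prob (traj n (E n) p (tie n) (nat \<lfloor>real n powr K\<rfloor>))
            {h. \<forall>t \<le> nat \<lfloor>real n powr K\<rfloor>.
                  real (vol n (E n) (red_set n (h t)))
                    \<ge> (1 + (1/2 - p)) / 2 * real (vol n (E n) (verts n))}) \<longlonglongrightarrow> 1)
      \<and> ((\<lambda>n. measure_pmf.prob (traj n (E n) p (tie n) (nat \<lfloor>real n powr K\<rfloor>))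
            {h. tau n (E n) h > enat (nat \<lfloor>real n powr K\<rfloor>)}) \<longlonglongrightarrow> 1)))"
proof -
  define m where "m = (\<lambda>n. real (Min (deg n (E n) ` verts n)))"
  have m_o: "(\<lambda>n. ln (real n)) \<in> o(m)"
    using mindeg by (simp add: m_def)
  have m_nonneg: "\<And>n. 0 \<le> m n" and deg_ge: "\<And>n. \<forall>u\<in>verts n. m n \<le> real (deg n (E n) u)"
    by (auto simp: m_def)
  show ?thesis
    using fast_disruption[OF sym _ p(2) m_o m_nonneg deg_ge]
      slow_disruption[OF sym p(1) _ _ m_o m_nonneg deg_ge]
    by blast
qed

end
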